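(* Let $(\mathcal X,d,\mu)$ be an RD-space with upper dimension constant $n$ (see context). Let $q\in(\max\{1,n/2\},\infty]$ and let $U\in\mathcal B_q(\mathcal X)$ be a nonnegative function which is not almost everywhere zero and such that the measure $U(z)\,d\mu(z)$ is doubling (i.e. there is $C>0$ with $\int_{B(x,2r)}U\,d\mu\le C\int_{B(x,r)}U\,d\mu$ for all $x\in\mathcal X$, $r>0$). For $x\in\mathcal X$ set $$\rho(x)=\sup\Big\{r>0:\ \frac{r^2}{V_r(x)}\int_{B(x,r)}U(y)\,d\mu(y)\le 1\Big\}.$$ Then $0<\rho(x)<\infty$ for every $x$, and $\rho$ is an admissible function, i.e. there exist constants $C_3,k_0>0$ such that for all $x,y\in\mathcal X$, $$\rho(y)\le C_3[\rho(x)]^{1/(1+k_0)}[\rho(x)+d(x,y)]^{k_0/(1+k_0)}.$$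
   Context: An RD-space is a triple $(\mathcal X,d,\mu)$ where $(\mathcal X,d)$ is a metric space and $\mu$ a regular Borel measure such that every ball $B(x,r)=\{y:d(x,y)<r\}$ has finite positive measure, $\mu$ is doubling ($\mu(B(x,2r))\le C_1\mu(B(x,r))$ for all $x$, $r>0$), and there exist constants $0<\kappa\le n$ and $C_2\ge1$ such that for all $x\in\mathcal X$, $0<r<\operatorname{diam}(\mathcal X)/2$ and $1\le\lambda<\operatorname{diam}(\mathcal X)/(2r)$, $C_2^{-1}\lambda^\kappa\mu(B(x,r))\le\mu(B(x,\lambda r))\le C_2\lambda^n\mu(B(x,r))$. Throughout, $\mu(\mathcal X)=\infty$. Notation: $V_r(x)=\mu(B(x,r))$, $V(x,y)=\mu(B(x,d(x,y)))$. Reverse Hölder class: for $q\in(1,\infty]$, a nonnegative locally integrable $U$ belongs to $\mathcal B_q(\mathcal X)$ if there is $C>0$ such that for every ball $B$, $\big(\frac1{\mu(B)}\int_B U^q\,d\mu\big)^{1/q}\le C\frac1{\mu(B)}\int_B U\,d\mu$ (with the usual essential-supremum modification when $q=\infty$). *)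

theory Defs
  imports "HOL-Analysis.Analysis"
begin

definition space_diam :: "'a::metric_space itself \<Rightarrow> ereal" where
  "space_diam _ = (SUP p \<in> (UNIV :: ('a \<times> 'a) set). ereal (dist (fst p) (snd p)))"

definition regular_borel :: "'a::metric_space measure \<Rightarrow> bool" where
  "regular_borel M \<longleftrightarrow> space M = UNIV \<and> sets M = sets borel \<and>
     (\<forall>A \<in> sets M. emeasure M A = (INF W \<in> {W. open W \<and> A \<subseteq> W}. emeasure M W))"

text \<open>The conditions on r and lambda:  0 < r < diam/2 and 1 <= lambda < diam/(2r)
  are written as  2r < diam  and  2 lambda r < diam  (r > 0).\<close>
definition rd_space :: "'a::metric_space measure \<Rightarrow> real \<Rightarrow> real \<Rightarrow> bool" where
  "rd_space M \<kappa> n \<longleftrightarrow>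
     regular_borel M \<and>
     (\<forall>x r. 0 < r \<longrightarrow> 0 < emeasure M (ball x r) \<and> emeasure M (ball x r) < \<infinity>) \<and>
     (\<exists>C1. \<forall>x r. 0 < r \<longrightarrow> measure M (ball x (2*r)) \<le> C1 * measure M (ball x r)) \<and>
     0 < \<kappa> \<and> \<kappa> \<le> n \<and>
     (\<exists>C2\<ge>1. \<forall>x r lam. 0 < r \<longrightarrow> ereal (2*r) < space_diam TYPE('a) \<longrightarrow>
         1 \<le> lam \<longrightarrow> ereal (2*lam*r) < space_diam TYPE('a) \<longrightarrow>
           (1/C2) * lam powr \<kappa> * measure M (ball x r) \<le> measure M (ball x (lam*r)) \<and>
           measure M (ball x (lam*r)) \<le> C2 * lam powr n * measure M (ball x r))"

definition Vr :: "'a::metric_space measure \<Rightarrow> real \<Rightarrow> 'a \<Rightarrow> real" where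
  "Vr M r x = measure M (ball x r)"

definition locally_integrable :: "'a::metric_space measure \<Rightarrow> ('a \<Rightarrow> real) \<Rightarrow> bool" where
  "locally_integrable M U \<longleftrightarrow> (\<forall>x r. set_integrable M (ball x r) U)"

text \<open>Reverse Hoelder class B_q, q in (1, infinity] (as an extended real).
  For finite q the inequality (avg_B U^q)^(1/q) <= C avg_B U is written in the
  equivalent form  int_B U^q <= mu(B) (C avg_B U)^q.\<close>
definition reverse_hoelder :: "'a::metric_space measure \<Rightarrow> ereal \<Rightarrow> ('a \<Rightarrow> real) \<Rightarrow> bool" where
  "reverse_hoelder M q U \<longleftrightarrow>
     U \<in> borel_measurable M \<and> (\<forall>x. 0 \<le> U x) \<and> locally_integrable M U \<and>
     (\<exists>C>0. \<forall>x r. 0 < r \<longrightarrow>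
        (let B = ball x r; avg = (1 / measure M B) * (LINT y:B|M. U y) in
          (if q = \<infinity> then (AE y in M. y \<in> B \<longrightarrow> U y \<le> C * avg)
           else (\<integral>\<^sup>+ y \<in> B. ennreal (U y powr real_of_ereal q) \<partial>M)
                  \<le> ennreal (measure M B * (C * avg) powr real_of_ereal q))))"

definition crit_rho :: "'a::metric_space measure \<Rightarrow> ('a \<Rightarrow> real) \<Rightarrow> 'a \<Rightarrow> ereal" where
  "crit_rho M U x = Sup (ereal ` {r. 0 < r \<and> r\<^sup>2 / Vr M r x * (LINT y:ball x r|M. U y) \<le> 1})"

end

theory Submission imports Defs begin

(*
  Everything is expressed through the scale function
      psi x r = r^2 / V_r(x) * int_{B(x,r)} U,
  so that rho(x) = sup {r > 0. psi x r <= 1}.  We establish three estimates: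
   (1) decay:  psi x r <= K (r/R)^delta psi x R  for r <= R, some delta in (0,1];
       this comes from the reverse Hoelder inequality (via Young's inequality
       for finite q) combined with the upper dimension bound V_R <= C (R/r)^n V_r
       and the hypothesis q > n/2;
   (2) growth: psi y R <= K2 (R/t)^m psi y t for t <= R, from doubling of U dmu;
   (3) shift:  psi x R <= K3 psi y (2R) when d(x,y) <= R, from doubling of mu.
  Decay and U not a.e. zero give 0 < rho < infinity.  Chaining (1)-(3) from a
  radius just above rho(x) to a radius just below rho(y) yields a polynomial
  inequality between these radii, which an elementary lemma turns into
  rho(y) <= C rho(x)^a (rho(x) + d(x,y))^(1-a) with a = delta/m in (0,1);
  the theorem follows with k0 = 1/a - 1.
*)

section \<open>Basic facts about RD-spaces\<close>

lemma rd_space_ball_sets: "rd_space M \<kappa> n \<Longrightarrow> ball x r \<in> sets M"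
  unfolding rd_space_def regular_borel_def by auto

lemma rd_space_ball_measure:
  assumes "rd_space M \<kappa> n" "0 < r"
  shows "emeasure M (ball x r) = ennreal (measure M (ball x r))" "0 < measure M (ball x r)"
proof -
  have fin: "0 < emeasure M (ball x r)" "emeasure M (ball x r) < \<infinity>"
    using assms unfolding rd_space_def by auto
  then show eq: "emeasure M (ball x r) = ennreal (measure M (ball x r))"
    by (intro emeasure_eq_ennreal_measure) auto
  show "0 < measure M (ball x r)"
    using fin eq by (metis ennreal_less_zero_iff)
qed

lemma rd_space_ball_mono:
  assumes rd: "rd_space M \<kappa> n" and "0 < r" "0 < R" and "ball x r \<subseteq> ball y R"
  shows "measure M (ball x r) \<le> measure M (ball y R)"
proof -
  have "emeasure M (ball x r) \<le> emeasure M (ball y R)"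
    using assms by (intro emeasure_mono rd_space_ball_sets[OF rd])
  then show ?thesis using rd_space_ball_measure[OF rd] assms(2,3)
    by (simp add: ennreal_le_iff)
qed

lemma rd_space_doubling:
  fixes M :: "'a::metric_space measure"
  assumes rd: "rd_space M \<kappa> n"
  obtains C1 where "0 < C1" "\<And>x r. 0 < r \<Longrightarrow> measure M (ball x (2*r)) \<le> C1 * measure M (ball x r)"
proof -
  obtain C1 where C1: "\<And>x r. 0 < r \<Longrightarrow> measure M (ball x (2*r)) \<le> C1 * measure M (ball x r)"
    using rd unfolding rd_space_def by blast
  fix x0 :: 'a
  have "0 < measure M (ball x0 (2*1))" using rd_space_ball_measure[OF rd] by simp
  also have "\<dots> \<le> C1 * measure M (ball x0 1)" using C1[of 1 x0] by simp
  finally have "0 < C1" using rd_space_ball_measure(2)[OF rd, of 1 x0]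
    by (simp add: zero_less_mult_iff)
  with C1 show thesis using that by blast
qed

text \<open>A space of infinite measure has infinite diameter, since balls have finite
  measure; hence the dimension bounds of an RD-space hold at all scales.\<close>
lemma rd_space_diam_infinite:
  fixes M :: "'a::metric_space measure"
  assumes rd: "rd_space M \<kappa> n" and inf: "emeasure M UNIV = \<infinity>"
  shows "space_diam TYPE('a) = \<infinity>"
proof (rule ccontr)
  assume ne: "space_diam TYPE('a) \<noteq> \<infinity>"
  have dist_le: "ereal (dist x y) \<le> space_diam TYPE('a)" for x y :: 'a
    using SUP_upper[of "(x, y)" UNIV "\<lambda>p. ereal (dist (fst p) (snd p))"]
    unfolding space_diam_def by simp
  then have "space_diam TYPE('a) \<noteq> -\<infinity>" by (metis MInfty_neq_ereal(1) ereal_infty_less_eq(2))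
  then obtain D where D: "space_diam TYPE('a) = ereal D"
    using ne by (cases "space_diam TYPE('a)") auto
  fix x0 :: 'a
  have "UNIV \<subseteq> ball x0 (D+1)"
  proof
    fix y :: 'a
    show "y \<in> ball x0 (D+1)" using dist_le[of x0 y] D by simp
  qed
  then have "emeasure M UNIV \<le> emeasure M (ball x0 (D+1))"
    by (intro emeasure_mono rd_space_ball_sets[OF rd])
  also have "\<dots> < \<infinity>"
    using rd_space_ball_measure[OF rd, of "D+1" x0] dist_le[of x0 x0] D by simp
  finally show False using inf by simp
qed

lemma rd_space_upper_dimension:
  fixes M :: "'a::metric_space measure"
  assumes rd: "rd_space M \<kappa> n" and inf: "emeasure M UNIV = \<infinity>"
  obtains C2 where "C2 \<ge> 1" "\<And>x r R. 0 < r \<Longrightarrow> r \<le> R \<Longrightarrow>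
     measure M (ball x R) \<le> C2 * (R/r) powr n * measure M (ball x r)"
proof -
  have diam: "space_diam TYPE('a) = \<infinity>" using rd_space_diam_infinite[OF rd inf] .
  obtain C2 where C2: "C2 \<ge> 1" and up: "\<And>x r lam. 0 < r \<Longrightarrow> ereal (2*r) < space_diam TYPE('a) \<Longrightarrow>
         1 \<le> lam \<Longrightarrow> ereal (2*lam*r) < space_diam TYPE('a) \<Longrightarrow>
           measure M (ball x (lam*r)) \<le> C2 * lam powr n * measure M (ball x r)"
    using rd unfolding rd_space_def by blast
  have "measure M (ball x R) \<le> C2 * (R/r) powr n * measure M (ball x r)"
    if "0 < r" "r \<le> R" for x r R
    using up[of r "R/r" x] that by (simp add: diam)
  with C2 show thesis using that by blast
qed

section \<open>Integrals of nonnegative functions over sets\<close>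

lemma set_integral_nonneg_fun:
  fixes U :: "'a \<Rightarrow> real"
  assumes "\<And>x. 0 \<le> U x"
  shows "0 \<le> (LINT y:A|M. U y)"
  unfolding set_lebesgue_integral_def
  using assms by (intro integral_nonneg_AE) (auto split: split_indicator)

lemma set_integral_mono_set:
  fixes U :: "'a \<Rightarrow> real"
  assumes "set_integrable M A U" "set_integrable M B U" "A \<subseteq> B" "\<And>x. 0 \<le> U x"
  shows "(LINT y:A|M. U y) \<le> (LINT y:B|M. U y)"
  unfolding set_lebesgue_integral_def
  using assms unfolding set_integrable_def
  by (intro integral_mono) (auto split: split_indicator)

lemma nn_set_integral_eq_set_integral_nonneg:
  fixes U :: "'a \<Rightarrow> real"
  assumes "set_integrable M A U" "\<And>x. 0 \<le> U x"
  shows "(\<integral>\<^sup>+ y. ennreal (U y) * indicator A y \<partial>M) = ennreal (LINT y:A|M. U y)"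
proof -
  have "(\<integral>\<^sup>+ y. ennreal (U y) * indicator A y \<partial>M) = (\<integral>\<^sup>+ y. ennreal (indicator A y *\<^sub>R U y) \<partial>M)"
    by (intro nn_integral_cong) (auto split: split_indicator)
  also have "\<dots> = ennreal (integral\<^sup>L M (\<lambda>y. indicator A y *\<^sub>R U y))"
    using assms unfolding set_integrable_def
    by (intro nn_integral_eq_integral) (auto split: split_indicator)
  finally show ?thesis unfolding set_lebesgue_integral_def .
qed

text \<open>If the integral over every ball about \<open>x\<close> vanishes, a nonnegative function
  vanishes almost everywhere (the balls \<open>B(x,k)\<close> exhaust the space).\<close>
lemma exists_ball_positive_integral:
  fixes M :: "'a::metric_space measure" and U :: "'a \<Rightarrow> real"
  assumes U0: "\<And>x. 0 \<le> U x" and Ui: "locally_integrable M U"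
    and nz: "\<not> (AE x in M. U x = 0)"
  obtains R where "0 < R" "0 < (LINT y:ball x R|M. U y)"
proof -
  have vanish: "AE y in M. indicator (ball x (real (Suc k))) y *\<^sub>R U y = 0"
    if "\<And>R. 0 < R \<Longrightarrow> (LINT y:ball x R|M. U y) \<le> 0" for k
  proof -
    have int: "integrable M (\<lambda>y. indicator (ball x (real (Suc k))) y *\<^sub>R U y)"
      using Ui unfolding locally_integrable_def set_integrable_def by auto
    have "integral\<^sup>L M (\<lambda>y. indicator (ball x (real (Suc k))) y *\<^sub>R U y) = 0"
      using that[of "real (Suc k)"] set_integral_nonneg_fun[of U M "ball x (real (Suc k))", OF U0]
      unfolding set_lebesgue_integral_def by linarith
    moreover have "AE y in M. 0 \<le> indicator (ball x (real (Suc k))) y *\<^sub>R U y"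
      using U0 by (intro AE_I2) (simp split: split_indicator)
    ultimately show ?thesis using integral_nonneg_eq_0_iff_AE[OF int] by blast
  qed
  show thesis
  proof (rule ccontr)
    assume "\<not> thesis"
    then have "\<And>R. 0 < R \<Longrightarrow> (LINT y:ball x R|M. U y) \<le> 0" using that by force
    then have "AE y in M. \<forall>k. indicator (ball x (real (Suc k))) y *\<^sub>R U y = 0"
      using vanish by (subst AE_all_countable) blast
    then have "AE y in M. U y = 0"
    proof eventually_elim
      case (elim y)
      obtain k :: nat where "dist x y < real k" using reals_Archimedean2 by blast
      then show ?case using elim[rule_format, of k] by simp
    qed
    then show False using nz by simp
  qed
qed

section \<open>The reverse Hoelder inequality compares averages on nested balls\<close>

lemma young_scaled:
  fixes u l p :: real
  assumes "0 \<le> u" "0 < l" "1 < p"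
  shows "u \<le> (l powr (1-p) / p) * u powr p + (1 - 1/p) * l"
proof -
  define p' where "p' = p / (p-1)"
  have p': "1 < p'" "1/p + 1/p' = 1" using assms unfolding p'_def by (auto simp: field_simps)
  have "(u/l) * 1 \<le> (u/l) powr p / p + 1 powr p' / p'"
    using assms p' by (intro Youngs_inequality) auto
  then have "u/l \<le> (u/l) powr p / p + (1 - 1/p)" using p' by simp
  then have "l * (u/l) \<le> l * ((u/l) powr p / p + (1 - 1/p))"
    using assms by (intro mult_left_mono) auto
  moreover have "l * ((u/l) powr p / p) = (l powr (1-p) / p) * u powr p"
    using assms by (simp add: powr_divide powr_diff)
  ultimately show ?thesis using assms by (simp add: algebra_simps)
qed

lemma young_set_integral:
  fixes U :: "'a \<Rightarrow> real"
  assumes Um: "U \<in> borel_measurable M" and U0: "\<And>x. 0 \<le> U x"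
    and sets: "A \<in> sets M" "B \<in> sets M" "A \<subseteq> B" and l: "0 < l" and p: "1 < p"
  shows "(\<integral>\<^sup>+ y. ennreal (U y) * indicator A y \<partial>M) \<le>
     ennreal (l powr (1-p) / p) * (\<integral>\<^sup>+ y \<in> B. ennreal (U y powr p) \<partial>M)
       + ennreal ((1 - 1/p) * l) * emeasure M A"
proof -
  define \<alpha> where "\<alpha> = l powr (1-p) / p"
  define \<beta> where "\<beta> = (1 - 1/p) * l"
  have \<alpha>\<beta>: "0 \<le> \<alpha>" "0 \<le> \<beta>" unfolding \<alpha>_def \<beta>_def using p l by auto
  have pointwise: "ennreal (U y) * indicator A y \<le>
      ennreal \<alpha> * (ennreal (U y powr p) * indicator B y) + ennreal \<beta> * indicator A y" for y
  proof (cases "y \<in> A")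
    case True
    have "ennreal (U y) \<le> ennreal (\<alpha> * U y powr p + \<beta>)"
      unfolding \<alpha>_def \<beta>_def using young_scaled[OF U0 l p] by (rule ennreal_leI)
    also have "\<dots> = ennreal \<alpha> * ennreal (U y powr p) + ennreal \<beta>"
      using \<alpha>\<beta> by (simp add: ennreal_plus ennreal_mult)
    finally show ?thesis using True sets by auto
  qed simp
  have "(\<integral>\<^sup>+ y. ennreal (U y) * indicator A y \<partial>M) \<le>
      (\<integral>\<^sup>+ y. ennreal \<alpha> * (ennreal (U y powr p) * indicator B y) + ennreal \<beta> * indicator A y \<partial>M)"
    by (intro nn_integral_mono pointwise)
  also have "\<dots> = ennreal \<alpha> * (\<integral>\<^sup>+ y \<in> B. ennreal (U y powr p) \<partial>M) + ennreal \<beta> * emeasure M A"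
    using Um sets by (simp add: nn_integral_add nn_integral_cmult)
  finally show ?thesis unfolding \<alpha>_def \<beta>_def .
qed

definition rh_comparison :: "'a::metric_space measure \<Rightarrow> ('a \<Rightarrow> real) \<Rightarrow> real \<Rightarrow> real \<Rightarrow> bool" where
  "rh_comparison M U C p \<longleftrightarrow> (\<forall>x r R. 0 < r \<longrightarrow> r \<le> R \<longrightarrow>
     (LINT y:ball x r|M. U y) \<le> C * (measure M (ball x R) / measure M (ball x r)) powr (1/p)
           * ((1 / measure M (ball x R)) * (LINT y:ball x R|M. U y)) * measure M (ball x r))"

text \<open>At the level \<open>l = C (V_R/V_r)^(1/p) A\<close> the two terms of Young's inequality,
  bounded via the reverse Hoelder inequality, add up to exactly \<open>l V_r\<close>.\<close>
lemma young_level_balance: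
  fixes C A VR Vr p l :: real
  assumes C: "0 < C" and A: "0 < A" and V: "0 < Vr" "0 < VR" and p: "1 < p"
    and l_def: "l = C * (VR / Vr) powr (1/p) * A"
  shows "l powr (1-p) / p * (VR * (C * A) powr p) + (1 - 1/p) * l * Vr = l * Vr"
proof -
  have l: "0 < l" unfolding l_def using C A V by simp
  have "l powr p = (C * A) powr p * (VR / Vr)"
    unfolding l_def using C A V p by (simp add: powr_mult powr_powr mult_ac)
  then have "VR * (C * A) powr p = l powr p * Vr" using V by (simp add: field_simps)
  moreover have "l powr (1-p) * l powr p = l" using l by (simp add: powr_add[symmetric])
  ultimately show ?thesis using p by (simp add: field_simps)
qed

text \<open>Finite exponent: apply Young's inequality with the level
  \<open>l = C (V_R/V_r)^(1/p) A_R\<close>, which balances its two terms.\<close>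
lemma rh_comparison_finite:
  fixes M :: "'a::metric_space measure"
  assumes rd: "rd_space M \<kappa> n"
    and Um: "U \<in> borel_measurable M" and U0: "\<And>x. 0 \<le> U x" and Ui: "locally_integrable M U"
    and p: "1 < p" and C: "0 < C"
    and RH: "\<And>x r. 0 < r \<Longrightarrow> (\<integral>\<^sup>+ y \<in> ball x r. ennreal (U y powr p) \<partial>M)
        \<le> ennreal (measure M (ball x r) * (C * ((1 / measure M (ball x r)) * (LINT y:ball x r|M. U y))) powr p)"
  shows "rh_comparison M U C p"
  unfolding rh_comparison_def
proof (intro allI impI)
  fix x and r R :: real assume r: "0 < r" "r \<le> R"
  define Vr VR Ir IR where "Vr = measure M (ball x r)" and "VR = measure M (ball x R)"
    and "Ir = (LINT y:ball x r|M. U y)" and "IR = (LINT y:ball x R|M. U y)"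
  define A where "A = (1 / VR) * IR"
  have V: "0 < Vr" "0 < VR" using rd_space_ball_measure[OF rd] r unfolding Vr_def VR_def by auto
  have sub: "ball x r \<subseteq> ball x R" using r by auto
  have IrR: "Ir \<le> IR" unfolding Ir_def IR_def
    using Ui sub U0 unfolding locally_integrable_def by (intro set_integral_mono_set) auto
  have Ir0: "0 \<le> Ir" unfolding Ir_def using U0 by (rule set_integral_nonneg_fun)
  have A0: "0 \<le> A" unfolding A_def using IrR Ir0 V by auto
  show "Ir \<le> C * (VR / Vr) powr (1/p) * A * Vr"
  proof (cases "A = 0")
    case True
    then show ?thesis using IrR V unfolding A_def by simp
  next
    case False
    define l where "l = C * (VR / Vr) powr (1/p) * A"
    have l: "0 < l" unfolding l_def using C A0 False V by simp
    have balance: "l powr (1-p) / p * (VR * (C * A) powr p) + (1 - 1/p) * l * Vr = l * Vr"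
      using young_level_balance[OF C _ V p l_def] A0 False by simp
    have "ennreal Ir = (\<integral>\<^sup>+ y. ennreal (U y) * indicator (ball x r) y \<partial>M)"
      using nn_set_integral_eq_set_integral_nonneg[of M "ball x r" U] Ui U0
      unfolding locally_integrable_def Ir_def by simp
    also have "\<dots> \<le> ennreal (l powr (1-p) / p) * (\<integral>\<^sup>+ y \<in> ball x R. ennreal (U y powr p) \<partial>M)
       + ennreal ((1 - 1/p) * l) * emeasure M (ball x r)"
      using rd_space_ball_sets[OF rd] by (intro young_set_integral[OF Um U0 _ _ sub l p])
    also have "\<dots> \<le> ennreal (l powr (1-p) / p) * ennreal (VR * (C * A) powr p)
       + ennreal ((1 - 1/p) * l) * ennreal Vr"
      using RH[of R x] r rd_space_ball_measure(1)[OF rd r(1), of x]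
      unfolding VR_def Vr_def A_def IR_def by (intro add_mono mult_left_mono) auto
    also have "\<dots> = ennreal (l * Vr)"
    proof -
      define \<alpha> \<beta> where "\<alpha> = l powr (1-p) / p" and "\<beta> = (1 - 1/p) * l"
      have "0 \<le> \<alpha>" "0 \<le> \<beta>" unfolding \<alpha>_def \<beta>_def using l p by auto
      then have "ennreal \<alpha> * ennreal (VR * (C * A) powr p) + ennreal \<beta> * ennreal Vr
          = ennreal (\<alpha> * (VR * (C * A) powr p) + \<beta> * Vr)"
        using V by (simp add: ennreal_plus ennreal_mult)
      then show ?thesis unfolding \<alpha>_def \<beta>_def balance .
    qed
    finally have "Ir \<le> l * Vr" using l V by (subst (asm) ennreal_le_iff) auto
    then show ?thesis unfolding l_def .
  qed
qed

text \<open>Infinite exponent: \<open>U \<le> C A_R\<close> a.e. on \<open>B(x,R)\<close>, which is stronger than the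
  comparison for any \<open>p > 0\<close> since \<open>V_R/V_r \<ge> 1\<close>.\<close>
lemma rh_comparison_infinite:
  fixes M :: "'a::metric_space measure"
  assumes rd: "rd_space M \<kappa> n"
    and U0: "\<And>x. 0 \<le> U x" and Ui: "locally_integrable M U"
    and p: "0 < p" and C: "0 < C"
    and RH: "\<And>x r. 0 < r \<Longrightarrow> (AE y in M. y \<in> ball x r \<longrightarrow>
        U y \<le> C * ((1 / measure M (ball x r)) * (LINT y:ball x r|M. U y)))"
  shows "rh_comparison M U C p"
  unfolding rh_comparison_def
proof (intro allI impI)
  fix x and r R :: real assume r: "0 < r" "r \<le> R"
  define Vr VR Ir where "Vr = measure M (ball x r)" and "VR = measure M (ball x R)"
    and "Ir = (LINT y:ball x r|M. U y)"
  define A where "A = (1 / VR) * (LINT y:ball x R|M. U y)"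
  have V: "0 < Vr" "0 < VR" using rd_space_ball_measure[OF rd] r unfolding Vr_def VR_def by auto
  have VrR: "Vr \<le> VR" unfolding Vr_def VR_def using r by (intro rd_space_ball_mono[OF rd]) auto
  have A0: "0 \<le> A" unfolding A_def using V set_integral_nonneg_fun[of U M "ball x R", OF U0] by simp
  have "Ir \<le> (LINT y:ball x r|M. C * A)"
    unfolding Ir_def using Ui unfolding locally_integrable_def
  proof (intro set_integral_mono_AE)
    have "0 < R" using r by simp
    from RH[OF this, of x] show "AE y\<in>ball x r in M. U y \<le> C * A"
      unfolding A_def VR_def by eventually_elim (use r in auto)
  qed (use rd_space_ball_sets[OF rd] rd_space_ball_measure(1)[OF rd r(1)] in
        \<open>auto simp: set_integrable_def intro!: integrable_real_indicator\<close>)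
  also have "\<dots> = C * A * Vr"
    using rd_space_ball_sets[OF rd] rd_space_ball_measure(1)[OF rd r(1), of x]
    unfolding Vr_def by (subst set_integral_const) auto
  also have "\<dots> \<le> C * (VR / Vr) powr (1/p) * A * Vr"
  proof -
    have "1 \<le> (VR / Vr) powr (1/p)" using VrR V p by (intro ge_one_powr_ge_zero) auto
    then show ?thesis using C A0 V by (simp add: mult_right_mono)
  qed
  finally show "Ir \<le> C * (VR / Vr) powr (1/p) * A * Vr" .
qed

text \<open>Both cases together; the exponent \<open>p\<close> obtained exceeds \<open>max 1 (n/2)\<close>
  (for \<open>q = \<infinity>\<close> any such \<open>p\<close> works, e.g. \<open>n + 1\<close>).\<close>
lemma reverse_hoelder_comparison:
  fixes M :: "'a::metric_space measure"
  assumes rd: "rd_space M \<kappa> n" and q: "ereal (max 1 (n/2)) < q" and RHq: "reverse_hoelder M q U"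
  obtains p C where "max 1 (n/2) < p" "0 < C" "rh_comparison M U C p"
proof -
  have Um: "U \<in> borel_measurable M" and U0: "\<And>x. 0 \<le> U x" and Ui: "locally_integrable M U"
    using RHq unfolding reverse_hoelder_def by auto
  obtain C where C: "C > 0" and RH: "\<And>x r. 0 < r \<Longrightarrow>
        (let B = ball x r; avg = (1 / measure M B) * (LINT y:B|M. U y) in
          (if q = \<infinity> then (AE y in M. y \<in> B \<longrightarrow> U y \<le> C * avg)
           else (\<integral>\<^sup>+ y \<in> B. ennreal (U y powr real_of_ereal q) \<partial>M)
                  \<le> ennreal (measure M B * (C * avg) powr real_of_ereal q)))"
    using RHq unfolding reverse_hoelder_def by blast
  show thesis
  proof (cases q)
    case (real p)
    have "rh_comparison M U C p"
      using RH real q by (intro rh_comparison_finite[OF rd Um U0 Ui _ C]) (auto simp: Let_def)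
    then show thesis using that q real C by simp
  next
    case PInf
    have n: "0 < n" using rd unfolding rd_space_def by auto
    have "rh_comparison M U C (n+1)"
      using RH PInf n by (intro rh_comparison_infinite[OF rd U0 Ui _ C]) (auto simp: Let_def)
    then show thesis using n C by (intro that) auto
  next
    case MInf
    then show thesis using q by simp
  qed
qed

section \<open>The scale function \<open>psi\<close>\<close>

definition psi :: "'a::metric_space measure \<Rightarrow> ('a \<Rightarrow> real) \<Rightarrow> 'a \<Rightarrow> real \<Rightarrow> real" where
  "psi M U x r = r\<^sup>2 / Vr M r x * (LINT y:ball x r|M. U y)"

lemma crit_rho_psi: "crit_rho M U x = Sup (ereal ` {r. 0 < r \<and> psi M U x r \<le> 1})"
  unfolding crit_rho_def psi_def ..

lemma psi_nonneg: "(\<And>x. 0 \<le> U x) \<Longrightarrow> 0 \<le> psi M U x r"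
  unfolding psi_def Vr_def using set_integral_nonneg_fun[of U M "ball x r"] by auto

lemma volume_ratio_powr:
  fixes M :: "'a::metric_space measure"
  assumes rd: "rd_space M \<kappa> n" and C2: "1 \<le> C2"
    and up: "measure M (ball x R) \<le> C2 * (R/r) powr n * measure M (ball x r)"
    and r: "0 < r" "r \<le> R" and p: "0 < p"
  shows "(measure M (ball x R) / measure M (ball x r)) powr (1/p) \<le> C2 powr (1/p) * (R/r) powr (n/p)"
proof -
  have V: "0 < measure M (ball x r)" "0 < measure M (ball x R)"
    using rd_space_ball_measure(2)[OF rd] r by auto
  then have "measure M (ball x R) / measure M (ball x r) \<le> C2 * (R/r) powr n"
    using up by (simp add: field_simps)
  then have "(measure M (ball x R) / measure M (ball x r)) powr (1/p) \<le> (C2 * (R/r) powr n) powr (1/p)"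
    using V p by (intro powr_mono2) auto
  also have "\<dots> = C2 powr (1/p) * (R/r) powr (n/p)"
    using C2 r by (simp add: powr_mult powr_powr)
  finally show ?thesis .
qed

lemma powr_ratio_square:
  fixes r R e :: real
  assumes "0 < r" "r \<le> R"
  shows "(R/r) powr e * r\<^sup>2 = (r/R) powr (2 - e) * R\<^sup>2"
proof -
  have "(R/r) powr e = 1 / (r/R) powr e" using assms by (simp add: powr_divide)
  moreover have "r\<^sup>2 = (r/R) powr 2 * R\<^sup>2" using assms by (simp add: power_divide)
  moreover have "(r/R) powr 2 / (r/R) powr e = (r/R) powr (2 - e)"
    using assms by (simp add: powr_diff)
  ultimately show ?thesis by (simp add: field_simps)
qed

text \<open>The reverse Hoelder comparison and the upper
  dimension bound give the exponent \<open>2 - n/p > 0\<close>; this is where \<open>q > n/2\<close> enters.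
  We cap the exponent at \<open>1\<close>, which is convenient later.\<close>
lemma psi_decay:
  fixes M :: "'a::metric_space measure"
  assumes rd: "rd_space M \<kappa> n" and inf: "emeasure M UNIV = \<infinity>"
    and q: "ereal (max 1 (n/2)) < q" and RHq: "reverse_hoelder M q U"
  obtains K \<delta> where "0 < K" "0 < \<delta>" "\<delta> \<le> 1"
    "\<And>x r R. 0 < r \<Longrightarrow> r \<le> R \<Longrightarrow> psi M U x r \<le> K * (r/R) powr \<delta> * psi M U x R"
proof -
  have U0: "\<And>x. 0 \<le> U x" using RHq unfolding reverse_hoelder_def by auto
  obtain p C where pq: "max 1 (n/2) < p" and C: "0 < C" and cmp: "rh_comparison M U C p"
    using reverse_hoelder_comparison[OF rd q RHq] by blast
  obtain C2 where C2: "C2 \<ge> 1" and up: "\<And>x r R. 0 < r \<Longrightarrow> r \<le> R \<Longrightarrow>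
     measure M (ball x R) \<le> C2 * (R/r) powr n * measure M (ball x r)"
    using rd_space_upper_dimension[OF rd inf] by blast
  have p: "0 < p" using pq by simp
  define \<delta> where "\<delta> = min (2 - n/p) 1"
  define K where "K = C * C2 powr (1/p)"
  have "psi M U x r \<le> K * (r/R) powr \<delta> * psi M U x R" if r: "0 < r" "r \<le> R" for x r R
  proof -
    define Vr VR A where "Vr = measure M (ball x r)" and "VR = measure M (ball x R)"
      and "A = (1 / VR) * (LINT y:ball x R|M. U y)"
    have V: "0 < Vr" "0 < VR" using rd_space_ball_measure[OF rd] r unfolding Vr_def VR_def by auto
    have A0: "0 \<le> A" unfolding A_def using V set_integral_nonneg_fun[of U M "ball x R", OF U0] by simp
    have "psi M U x r = r\<^sup>2 / Vr * (LINT y:ball x r|M. U y)" unfolding psi_def Vr_def Defs.Vr_def ..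
    also have "\<dots> \<le> r\<^sup>2 / Vr * (C * (VR / Vr) powr (1/p) * A * Vr)"
      using cmp r V unfolding rh_comparison_def A_def VR_def Vr_def by (intro mult_left_mono) auto
    also have "\<dots> = C * (VR / Vr) powr (1/p) * r\<^sup>2 * A" using V by simp
    also have "\<dots> \<le> C * (C2 powr (1/p) * (R/r) powr (n/p)) * r\<^sup>2 * A"
      using volume_ratio_powr[OF rd C2 up[OF r] r p] C A0
      unfolding VR_def Vr_def by (intro mult_right_mono mult_left_mono) auto
    also have "\<dots> = K * (r/R) powr (2 - n/p) * (R\<^sup>2 * A)"
      unfolding K_def using powr_ratio_square[OF r, of "n/p"] by (simp add: mult_ac)
    also have "\<dots> \<le> K * (r/R) powr \<delta> * (R\<^sup>2 * A)"
      unfolding K_def \<delta>_def using r C C2 A0 by (intro mult_right_mono mult_left_mono powr_mono') auto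
    also have "R\<^sup>2 * A = psi M U x R" unfolding psi_def A_def VR_def Defs.Vr_def by simp
    finally show ?thesis .
  qed
  moreover have "0 < \<delta>" "\<delta> \<le> 1" unfolding \<delta>_def using pq p by (auto simp: field_simps)
  moreover have "0 < K" unfolding K_def using C C2 by simp
  ultimately show thesis using that by blast
qed

lemma doubling_polynomial_growth:
  fixes f :: "real \<Rightarrow> real" and a :: nat
  assumes mono: "\<And>r R. 0 < r \<Longrightarrow> r \<le> R \<Longrightarrow> f r \<le> f R"
    and nonneg: "\<And>r. 0 < r \<Longrightarrow> 0 \<le> f r"
    and dbl: "\<And>r. 0 < r \<Longrightarrow> f (2*r) \<le> 2^a * f r"
    and t: "0 < t" "t \<le> R"
  shows "f R \<le> (2*R/t)^a * f t"
proof -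
  have scales: "\<forall>R. t \<le> R \<longrightarrow> R \<le> 2^k * t \<longrightarrow> f R \<le> (2*R/t)^a * f t" for k :: nat
  proof (induction k)
    case 0
    then show ?case using t nonneg[of t] by (auto simp: mult_le_cancel_right1)
  next
    case (Suc k)
    show ?case
    proof (intro allI impI)
      fix R assume R: "t \<le> R" "R \<le> 2^Suc k * t"
      show "f R \<le> (2*R/t)^a * f t"
      proof (cases "2*t \<le> R")
        case True
        have half: "t \<le> R/2" "R/2 \<le> 2^k * t" using True R by auto
        have "f R = f (2*(R/2))" by simp
        also have "\<dots> \<le> 2^a * f (R/2)" using dbl[of "R/2"] t half by simp
        also have "\<dots> \<le> 2^a * ((2*(R/2)/t)^a * f t)"
        proof -
          have "f (R/2) \<le> (2*(R/2)/t)^a * f t" using Suc.IH half by blast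
          then show ?thesis by (intro mult_left_mono) auto
        qed
        also have "\<dots> = (2*R/t)^a * f t" by (simp add: power_mult_distrib[symmetric])
        finally show ?thesis .
      next
        case False
        have "f R \<le> f (2*t)" using False t R by (intro mono) auto
        also have "\<dots> \<le> 2^a * f t" using dbl[OF t(1)] .
        also have "\<dots> \<le> (2*R/t)^a * f t"
          using R t nonneg[OF t(1)] by (intro mult_right_mono power_mono) (auto simp: field_simps)
        finally show ?thesis .
      qed
    qed
  qed
  obtain k :: nat where "R/t < 2^k" using real_arch_pow[of 2 "R/t"] by auto
  then have "R \<le> 2^k * t" using t by (simp add: field_simps)
  then show ?thesis using scales[of k] t by blast
qed

lemma psi_growth:
  fixes M :: "'a::metric_space measure" and U :: "'a \<Rightarrow> real"
  assumes rd: "rd_space M \<kappa> n" and U0: "\<And>x. 0 \<le> U x" and Ui: "locally_integrable M U"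
    and DU: "\<exists>C>0. \<forall>x r. 0 < r \<longrightarrow>
           (LINT y:ball x (2*r)|M. U y) \<le> C * (LINT y:ball x r|M. U y)"
  obtains K2 m where "0 < K2" "1 < m"
    "\<And>y t R. 0 < t \<Longrightarrow> t \<le> R \<Longrightarrow> psi M U y R \<le> K2 * (R/t) powr m * psi M U y t"
proof -
  obtain C where D: "\<And>x r. 0 < r \<Longrightarrow> (LINT y:ball x (2*r)|M. U y) \<le> C * (LINT y:ball x r|M. U y)"
    using DU by blast
  obtain a :: nat where a: "max C 1 < 2^a" using real_arch_pow[of 2 "max C 1"] by auto
  define I where "I y r = (LINT z:ball y r|M. U z)" for y r
  have I0: "0 \<le> I y r" for y r unfolding I_def by (rule set_integral_nonneg_fun[OF U0])
  have "psi M U y R \<le> 2^a * (R/t) powr (real a + 2) * psi M U y t" if t: "0 < t" "t \<le> R" for y t R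
  proof -
    have IR: "I y R \<le> (2*R/t)^a * I y t"
    proof (rule doubling_polynomial_growth[OF _ _ _ t])
      show "I y r \<le> I y R'" if "0 < r" "r \<le> R'" for r R'
        unfolding I_def using Ui that U0 unfolding locally_integrable_def
        by (intro set_integral_mono_set) auto
      show "I y (2*r) \<le> 2^a * I y r" if "0 < r" for r
        using D[OF that, of y] a I0[of y r] unfolding I_def
        by (smt (verit, best) mult_right_mono)
    qed (rule I0)
    have V: "0 < Vr M t y" "Vr M t y \<le> Vr M R y"
      using rd_space_ball_measure[OF rd t(1)] t unfolding Vr_def
      by (auto intro!: rd_space_ball_mono[OF rd])
    have "psi M U y R = R\<^sup>2 / Vr M R y * I y R" unfolding psi_def I_def ..
    also have "\<dots> \<le> R\<^sup>2 / Vr M t y * I y R"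
      using V I0[of y R] by (intro mult_right_mono divide_left_mono) auto
    also have "\<dots> \<le> R\<^sup>2 / Vr M t y * ((2*R/t)^a * I y t)"
      using IR V by (intro mult_left_mono) auto
    also have "\<dots> = 2^a * ((R/t) ^ a * (R/t)\<^sup>2) * (t\<^sup>2 / Vr M t y * I y t)"
      using t by (simp add: power_mult_distrib power_divide field_simps)
    also have "\<dots> = 2^a * (R/t) powr (real a + 2) * psi M U y t"
    proof -
      have "(R/t) ^ a * (R/t)\<^sup>2 = (R/t) powr (real a + 2)"
        using t by (metis of_nat_add of_nat_numeral power_add powr_realpow divide_pos_pos order_less_le_trans)
      then show ?thesis unfolding psi_def I_def by simp
    qed
    finally show ?thesis .
  qed
  then show thesis by (intro that[of "2^a" "real a + 2"]) auto
qed

text \<open>Moving the centre: if \<open>d(x,y) \<le> R\<close> then \<open>B(x,R) \<subseteq> B(y,2R) \<subseteq> B(x,4R)\<close>, and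
  doubling of \<open>\<mu>\<close> gives \<open>psi x R \<le> K3 psi y (2R)\<close>.\<close>
lemma psi_shift:
  fixes M :: "'a::metric_space measure" and U :: "'a \<Rightarrow> real"
  assumes rd: "rd_space M \<kappa> n" and U0: "\<And>x. 0 \<le> U x" and Ui: "locally_integrable M U"
  obtains K3 where "0 < K3"
    "\<And>x y R. 0 < R \<Longrightarrow> dist x y \<le> R \<Longrightarrow> psi M U x R \<le> K3 * psi M U y (2*R)"
proof -
  obtain C1 where C1: "0 < C1" and dbl: "\<And>x r. 0 < r \<Longrightarrow> measure M (ball x (2*r)) \<le> C1 * measure M (ball x r)"
    using rd_space_doubling[OF rd] by blast
  have "psi M U x R \<le> (C1^2/4) * psi M U y (2*R)" if R: "0 < R" "dist x y \<le> R" for x y R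
  proof -
    define Vx Vy Ix Iy where "Vx = measure M (ball x R)" and "Vy = measure M (ball y (2*R))"
      and "Ix = (LINT z:ball x R|M. U z)" and "Iy = (LINT z:ball y (2*R)|M. U z)"
    have V: "0 < Vx" "0 < Vy" using rd_space_ball_measure[OF rd] R unfolding Vx_def Vy_def by auto
    have inner: "ball x R \<subseteq> ball y (2*R)"
    proof
      fix z assume "z \<in> ball x R"
      then show "z \<in> ball y (2*R)" using dist_triangle[of y z x] R by (simp add: dist_commute)
    qed
    have outer: "ball y (2*R) \<subseteq> ball x (2*(2*R))"
    proof
      fix z assume "z \<in> ball y (2*R)"
      then show "z \<in> ball x (2*(2*R))" using dist_triangle[of x z y] R by simp
    qed
    have "Vy \<le> measure M (ball x (2*(2*R)))"
      unfolding Vy_def using R outer by (intro rd_space_ball_mono[OF rd]) auto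
    also have "\<dots> \<le> C1 * (C1 * Vx)"
      using dbl[of "2*R" x] dbl[of R x] C1 R unfolding Vx_def
      by (smt (verit, best) mult_left_mono)
    finally have VyVx: "Vy \<le> C1^2 * Vx" by (simp add: power2_eq_square)
    have IxIy: "Ix \<le> Iy" unfolding Ix_def Iy_def using Ui inner U0 unfolding locally_integrable_def
      by (intro set_integral_mono_set) auto
    have Ix0: "0 \<le> Ix" unfolding Ix_def by (rule set_integral_nonneg_fun[OF U0])
    have "psi M U x R = R\<^sup>2 / Vx * Ix" unfolding psi_def Vx_def Ix_def Vr_def ..
    also have "\<dots> \<le> (C1^2 * R\<^sup>2 / Vy) * Iy"
    proof (intro mult_mono)
      have "Vy * R\<^sup>2 \<le> (C1^2 * Vx) * R\<^sup>2" using VyVx by (intro mult_right_mono) auto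
      then show "R\<^sup>2 / Vx \<le> C1^2 * R\<^sup>2 / Vy" using V by (simp add: field_simps ac_simps)
    qed (use IxIy Ix0 V C1 in auto)
    also have "\<dots> = (C1^2/4) * psi M U y (2*R)" unfolding psi_def Vy_def Iy_def Vr_def
      by (simp add: power_mult_distrib)
    finally show ?thesis .
  qed
  then show thesis using C1 by (intro that[of "C1^2/4"]) auto
qed

section \<open>The critical radius is positive and finite\<close>

lemma crit_rho_ge: "0 < r \<Longrightarrow> psi M U x r \<le> 1 \<Longrightarrow> ereal r \<le> crit_rho M U x"
  unfolding crit_rho_psi by (rule Sup_upper) auto

lemma crit_rho_exceeded: "crit_rho M U x = ereal \<rho> \<Longrightarrow> \<rho> < r \<Longrightarrow> 0 < r \<Longrightarrow> 1 < psi M U x r"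
  using crit_rho_ge[of r M U x] by force

lemma crit_rho_approx:
  assumes "crit_rho M U x = ereal \<rho>" "0 < \<rho>"
  obtains t where "0 < t" "psi M U x t \<le> 1" "\<rho>/2 < t"
proof -
  have "ereal (\<rho>/2) < Sup (ereal ` {r. 0 < r \<and> psi M U x r \<le> 1})"
    using assms unfolding crit_rho_psi by simp
  then obtain e where "e \<in> ereal ` {r. 0 < r \<and> psi M U x r \<le> 1}" "ereal (\<rho>/2) < e"
    unfolding less_Sup_iff by blast
  then show thesis using that by auto
qed

lemma decay_small_radius:
  fixes f :: "real \<Rightarrow> real"
  assumes decay: "\<And>r R. 0 < r \<Longrightarrow> r \<le> R \<Longrightarrow> f r \<le> K * (r/R) powr \<delta> * f R"
    and K: "0 < K" and \<delta>: "0 < \<delta>" and f1: "0 \<le> f 1"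
  obtains r0 where "0 < r0" "f r0 \<le> 1"
proof -
  define c where "c = K * (f 1 + 1)"
  have c: "0 < c" unfolding c_def using K f1 by simp
  define r0 where "r0 = min 1 (c powr (-1/\<delta>))"
  have r0: "0 < r0" "r0 \<le> 1" unfolding r0_def using c by auto
  have "f r0 \<le> K * (r0/1) powr \<delta> * f 1" using decay[OF r0] .
  also have "\<dots> \<le> K * (c powr (-1/\<delta>)) powr \<delta> * f 1"
    using r0 K \<delta> f1 unfolding r0_def by (intro mult_right_mono mult_left_mono powr_mono2) auto
  also have "\<dots> = K * f 1 / c"
  proof -
    have "(c powr (-1/\<delta>)) powr \<delta> = c powr (-1)" using \<delta> by (simp add: powr_powr)
    also have "\<dots> = 1 / c" using c by (simp add: powr_minus divide_inverse)
    finally show ?thesis by simp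
  qed
  also have "\<dots> \<le> 1" using c K f1 unfolding c_def by (simp add: field_simps)
  finally show thesis using r0 that by blast
qed

text \<open>Decay also bounds the radii where \<open>f \<le> 1\<close>, once \<open>f R0 > 0\<close> for some \<open>R0\<close>:
  \<open>f R0 \<le> K (R0/r)^\<delta>\<close> forces \<open>r \<le> R0 (K / f R0)^(1/\<delta>)\<close>.\<close>
lemma decay_bounded_radii:
  fixes f :: "real \<Rightarrow> real"
  assumes decay: "\<And>r R. 0 < r \<Longrightarrow> r \<le> R \<Longrightarrow> f r \<le> K * (r/R) powr \<delta> * f R"
    and K: "0 < K" and \<delta>: "0 < \<delta>" and R0: "0 < R0" "0 < f R0"
  shows "\<exists>B. \<forall>r. 0 < r \<and> f r \<le> 1 \<longrightarrow> r \<le> B"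
proof (intro exI allI impI)
  fix r assume r: "0 < r \<and> f r \<le> 1"
  show "r \<le> max R0 (R0 * (K / f R0) powr (1/\<delta>))"
  proof (cases "r \<le> R0")
    case False
    have "f R0 \<le> K * (R0/r) powr \<delta> * f r" using decay[of R0 r] R0 False by simp
    also have "\<dots> \<le> K * (R0/r) powr \<delta>" using r K by (simp add: mult_left_le)
    finally have "(f R0 / K) powr (1/\<delta>) \<le> ((R0/r) powr \<delta>) powr (1/\<delta>)"
      using R0 K \<delta> by (intro powr_mono2) (auto simp: field_simps)
    also have "\<dots> = R0/r" using \<delta> R0 r by (simp add: powr_powr)
    finally have "r \<le> R0 / (f R0 / K) powr (1/\<delta>)" using r R0 K by (simp add: field_simps)
    also have "\<dots> = R0 * (K / f R0) powr (1/\<delta>)" using R0 K by (simp add: powr_divide)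
    finally show ?thesis by simp
  qed simp
qed

lemma crit_rho_pos_finite:
  fixes M :: "'a::metric_space measure" and U :: "'a \<Rightarrow> real"
  assumes rd: "rd_space M \<kappa> n" and inf: "emeasure M UNIV = \<infinity>"
    and q: "ereal (max 1 (n/2)) < q" and RHq: "reverse_hoelder M q U"
    and nz: "\<not> (AE x in M. U x = 0)"
  shows "crit_rho M U x = ereal (real_of_ereal (crit_rho M U x)) \<and> 0 < real_of_ereal (crit_rho M U x)"
proof -
  have U0: "\<And>x. 0 \<le> U x" and Ui: "locally_integrable M U"
    using RHq unfolding reverse_hoelder_def by auto
  obtain K \<delta> where K: "0 < K" and \<delta>: "0 < \<delta>"
    and decay: "\<And>r R. 0 < r \<Longrightarrow> r \<le> R \<Longrightarrow> psi M U x r \<le> K * (r/R) powr \<delta> * psi M U x R"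
    using psi_decay[OF rd inf q RHq] by metis
  obtain r0 where r0: "0 < r0" "psi M U x r0 \<le> 1"
    using decay_small_radius[OF decay K \<delta> psi_nonneg[OF U0]] by blast
  have lower: "ereal r0 \<le> crit_rho M U x" by (rule crit_rho_ge[OF r0])
  obtain R0 where R0: "0 < R0" "0 < (LINT y:ball x R0|M. U y)"
    using exists_ball_positive_integral[OF U0 Ui nz] by blast
  have "0 < psi M U x R0"
    unfolding psi_def Vr_def using R0 rd_space_ball_measure(2)[OF rd R0(1), of x] by simp
  then obtain B where "\<And>r. 0 < r \<Longrightarrow> psi M U x r \<le> 1 \<Longrightarrow> r \<le> B"
    using decay_bounded_radii[OF decay K \<delta> R0(1)] by blast
  then have "crit_rho M U x \<le> ereal B"
    unfolding crit_rho_psi by (intro Sup_least) auto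
  with lower r0 show ?thesis by (cases "crit_rho M U x") auto
qed

section \<open>Admissibility of the critical radius\<close>

lemma powr_interpolation_ge:
  fixes p d a :: real
  assumes "0 < p" "0 \<le> d" "a \<le> 1"
  shows "p \<le> p powr a * (p+d) powr (1-a)"
proof -
  have "p = p powr a * p powr (1-a)" using assms by (simp add: powr_add[symmetric])
  also have "\<dots> \<le> p powr a * (p+d) powr (1-a)"
    using assms by (intro mult_left_mono powr_mono2) auto
  finally show ?thesis .
qed

lemma powr_interpolation_double:
  fixes u d a :: real
  assumes "0 < u" "0 \<le> d" "0 \<le> a" "a \<le> 1"
  shows "(2*u) powr a * (2*u + d) powr (1-a) \<le> 2 * (u powr a * (u + d) powr (1-a))"
proof -
  have "(2*u + d) powr (1-a) \<le> (2 * (u + d)) powr (1-a)"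
    using assms by (intro powr_mono2) auto
  also have "\<dots> = 2 powr (1-a) * (u + d) powr (1-a)"
    using assms by (subst powr_mult) auto
  finally have "(2*u) powr a * (2*u + d) powr (1-a) \<le> (2*u) powr a * (2 powr (1-a) * (u + d) powr (1-a))"
    by (simp add: mult_left_mono)
  also have "\<dots> = (2 powr a * 2 powr (1-a)) * (u powr a * (u + d) powr (1-a))"
    using assms by (simp add: powr_mult mult_ac)
  also have "2 powr a * 2 powr (1-a) = (2::real)" by (simp add: powr_add[symmetric])
  finally show ?thesis .
qed

lemma powr_le_imp_le_root:
  fixes x y e :: real
  assumes "0 < x" "0 < e" "x powr e \<le> y"
  shows "x \<le> y powr (1/e)"
proof -
  have "x = (x powr e) powr (1/e)" using assms by (simp add: powr_powr)
  also have "\<dots> \<le> y powr (1/e)" using assms by (intro powr_mono2) auto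
  finally show ?thesis .
qed

lemma power_balance_bound:
  fixes L m \<delta> :: real
  assumes L: "0 < L" and \<delta>: "0 < \<delta>" "\<delta> < m"
  obtains C where "C \<ge> 1" "\<And>t p d. 0 < t \<Longrightarrow> 0 < p \<Longrightarrow> 0 \<le> d \<Longrightarrow>
           (p \<le> t + d \<Longrightarrow> t powr m \<le> L * p powr \<delta> * (t+d) powr (m-\<delta>)) \<Longrightarrow>
           t \<le> C * (p powr (\<delta>/m) * (p+d) powr (1-\<delta>/m))"
proof -
  define L' where "L' = L * 2 powr m"
  have L': "0 < L'" unfolding L'_def using L by simp
  define C where "C = max 1 (max (L' powr (1/m)) (L' powr (1/\<delta>)))"
  have m: "0 < m" "\<delta>/m \<le> 1" using \<delta> by auto
  have "t \<le> C * (p powr (\<delta>/m) * (p+d) powr (1-\<delta>/m))"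
    if t: "0 < t" and p: "0 < p" and d: "0 \<le> d"
      and H: "p \<le> t + d \<Longrightarrow> t powr m \<le> L * p powr \<delta> * (t+d) powr (m-\<delta>)" for t p d
  proof -
    let ?G = "p powr (\<delta>/m) * (p+d) powr (1-\<delta>/m)"
    have G: "p \<le> ?G" using powr_interpolation_ge[OF p d m(2)] .
    have doubled: "t powr m \<le> L' * p powr \<delta> * s powr (m-\<delta>)" if "p \<le> t + d" "t + d \<le> 2 * s" for s
    proof -
      have "t powr m \<le> L * p powr \<delta> * (2 * s) powr (m-\<delta>)"
        using H[OF that(1)] that t d L \<delta> by (elim order.trans, intro mult_left_mono powr_mono2) auto
      also have "\<dots> \<le> L * p powr \<delta> * (2 powr m * s powr (m-\<delta>))"
        using that t d L \<delta> by (simp add: powr_mult mult_left_mono mult_right_mono powr_mono)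
      finally show ?thesis unfolding L'_def by (simp add: mult_ac)
    qed
    consider "t + d < p" | "p \<le> t + d" "t \<le> d" | "p \<le> t + d" "d < t" by linarith
    then have "t \<le> max (L' powr (1/m)) (L' powr (1/\<delta>)) * ?G \<or> t \<le> ?G"
    proof cases
      case 1
      then show ?thesis using G d by simp
    next
      case 2
      have "t powr m \<le> L' * p powr \<delta> * (p+d) powr (m-\<delta>)" using doubled 2 p by simp
      then have "t \<le> (L' * p powr \<delta> * (p+d) powr (m-\<delta>)) powr (1/m)"
        by (rule powr_le_imp_le_root[OF t m(1)])
      also have "\<dots> = L' powr (1/m) * ?G"
        using L' p d m by (simp add: powr_mult powr_powr diff_divide_distrib)
      also have "\<dots> \<le> max (L' powr (1/m)) (L' powr (1/\<delta>)) * ?G"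
        by (intro mult_right_mono) auto
      finally show ?thesis ..
    next
      case 3
      have "t powr \<delta> * t powr (m-\<delta>) \<le> (L' * p powr \<delta>) * t powr (m-\<delta>)"
        using doubled[of t] 3 t by (simp add: powr_add[symmetric])
      then have "t \<le> (L' * p powr \<delta>) powr (1/\<delta>)" using t \<delta> by (intro powr_le_imp_le_root) auto
      also have "\<dots> = L' powr (1/\<delta>) * p" using L' p \<delta> by (simp add: powr_mult powr_powr)
      also have "\<dots> \<le> L' powr (1/\<delta>) * ?G" using G by (intro mult_left_mono) auto
      also have "\<dots> \<le> max (L' powr (1/m)) (L' powr (1/\<delta>)) * ?G"
        by (intro mult_right_mono) auto
      finally show ?thesis ..
    qed
    moreover have "max (L' powr (1/m)) (L' powr (1/\<delta>)) * ?G \<le> C * ?G" "1 * ?G \<le> C * ?G"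
      unfolding C_def by (intro mult_right_mono; simp)+
    ultimately show ?thesis by linarith
  qed
  moreover have "C \<ge> 1" unfolding C_def by simp
  ultimately show thesis using that by blast
qed

text \<open>Chaining decay at \<open>x\<close>, the shift from \<open>x\<close> to \<open>y\<close> and growth at \<open>y\<close> from a radius
  \<open>p\<close> where \<open>f x p > 1\<close> to a radius \<open>t\<close> where \<open>f y t \<le> 1\<close>, through \<open>R = t + d(x,y) \<ge> p\<close>,
  gives \<open>1 < L (p/R)^\<delta> (2R/t)^m\<close>, i.e. the hypothesis of \<open>power_balance_bound\<close>.\<close>
lemma radius_comparison:
  fixes f :: "'a::metric_space \<Rightarrow> real \<Rightarrow> real"
  assumes decay: "\<And>r R. 0 < r \<Longrightarrow> r \<le> R \<Longrightarrow> f x r \<le> K * (r/R) powr \<delta> * f x R"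
    and growth: "\<And>t R. 0 < t \<Longrightarrow> t \<le> R \<Longrightarrow> f y R \<le> K2 * (R/t) powr m * f y t"
    and shift: "\<And>R. 0 < R \<Longrightarrow> dist x y \<le> R \<Longrightarrow> f x R \<le> K3 * f y (2*R)"
    and K: "0 < K" "0 < K2" "0 < K3" and nonneg: "0 \<le> f y t"
    and p: "0 < p" "1 < f x p" and t: "0 < t" "f y t \<le> 1" and pR: "p \<le> t + dist x y"
  shows "t powr m \<le> (K * K3 * K2 * 2 powr m) * p powr \<delta> * (t + dist x y) powr (m-\<delta>)"
proof -
  define R where "R = t + dist x y"
  have R: "0 < R" "p \<le> R" "dist x y \<le> R" "t \<le> 2*R"
    unfolding R_def by (smt (verit) t(1) pR zero_le_dist)+
  have "1 < f x p" by (rule p(2))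
  also have "\<dots> \<le> K * (p/R) powr \<delta> * f x R" using decay[OF p(1) R(2)] .
  also have "\<dots> \<le> K * (p/R) powr \<delta> * (K3 * (K2 * (2*R/t) powr m * f y t))"
    using shift[OF R(1,3)] growth[OF t(1) R(4)] K by (intro mult_left_mono) (auto intro: order.trans)
  also have "\<dots> \<le> K * (p/R) powr \<delta> * (K3 * (K2 * (2*R/t) powr m * 1))"
    using t nonneg K by (intro mult_left_mono) auto
  finally have "t powr m < t powr m * (K * K3 * K2 * ((p/R) powr \<delta> * (2*R/t) powr m))"
    using t by (simp add: mult_ac)
  also have "\<dots> = (K * K3 * K2 * 2 powr m) * p powr \<delta> * (R powr m / R powr \<delta>)"
    using t R p by (simp add: powr_divide powr_mult mult_ac)
  also have "\<dots> = (K * K3 * K2 * 2 powr m) * p powr \<delta> * R powr (m-\<delta>)"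
    using R by (simp add: powr_diff)
  finally show ?thesis unfolding R_def by simp
qed

text \<open>Given \<open>x, y\<close>, take
  \<open>p = 2\<rho>(x)\<close> (so \<open>psi x p > 1\<close>) and \<open>t > \<rho>(y)/2\<close> with \<open>psi y t \<le> 1\<close>.\<close>
lemma crit_rho_admissible_power:
  fixes M :: "'a::metric_space measure" and U :: "'a \<Rightarrow> real"
  assumes rd: "rd_space M \<kappa> n" and inf: "emeasure M UNIV = \<infinity>"
    and q: "ereal (max 1 (n/2)) < q" and RHq: "reverse_hoelder M q U"
    and nz: "\<not> (AE x in M. U x = 0)"
    and DU: "\<exists>C>0. \<forall>x r. 0 < r \<longrightarrow>
           (LINT y:ball x (2*r)|M. U y) \<le> C * (LINT y:ball x r|M. U y)"
  defines "\<rho> \<equiv> \<lambda>x. real_of_ereal (crit_rho M U x)"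
  obtains C a where "0 < C" "0 < a" "a < 1"
    "\<And>x y. \<rho> y \<le> C * \<rho> x powr a * (\<rho> x + dist x y) powr (1-a)"
proof -
  have U0: "\<And>x. 0 \<le> U x" and Ui: "locally_integrable M U"
    using RHq unfolding reverse_hoelder_def by auto
  have \<rho>: "crit_rho M U x = ereal (\<rho> x)" "0 < \<rho> x" for x
    using crit_rho_pos_finite[OF rd inf q RHq nz] unfolding \<rho>_def by auto
  obtain K \<delta> where K: "0 < K" and \<delta>: "0 < \<delta>" "\<delta> \<le> 1"
    and decay: "\<And>x r R. 0 < r \<Longrightarrow> r \<le> R \<Longrightarrow> psi M U x r \<le> K * (r/R) powr \<delta> * psi M U x R"
    using psi_decay[OF rd inf q RHq] by blast
  obtain K2 m where K2: "0 < K2" and m: "1 < m"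
    and growth: "\<And>y t R. 0 < t \<Longrightarrow> t \<le> R \<Longrightarrow> psi M U y R \<le> K2 * (R/t) powr m * psi M U y t"
    using psi_growth[OF rd U0 Ui DU] by blast
  obtain K3 where K3: "0 < K3"
    and shift: "\<And>x y R. 0 < R \<Longrightarrow> dist x y \<le> R \<Longrightarrow> psi M U x R \<le> K3 * psi M U y (2*R)"
    using psi_shift[OF rd U0 Ui] by blast
  obtain C where C: "C \<ge> 1" and balance: "\<And>t p d. 0 < t \<Longrightarrow> 0 < p \<Longrightarrow> 0 \<le> d \<Longrightarrow>
      (p \<le> t + d \<Longrightarrow> t powr m \<le> (K * K3 * K2 * 2 powr m) * p powr \<delta> * (t+d) powr (m-\<delta>)) \<Longrightarrow>
      t \<le> C * (p powr (\<delta>/m) * (p+d) powr (1-\<delta>/m))"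
    using power_balance_bound[of "K * K3 * K2 * 2 powr m" \<delta> m] K K2 K3 \<delta> m by auto
  have "\<rho> y \<le> (4*C) * \<rho> x powr (\<delta>/m) * (\<rho> x + dist x y) powr (1 - \<delta>/m)" for x y
  proof -
    obtain t where t: "0 < t" "psi M U y t \<le> 1" "\<rho> y / 2 < t"
      using crit_rho_approx[OF \<rho>] by blast
    have p: "0 < 2 * \<rho> x" "1 < psi M U x (2 * \<rho> x)"
      using crit_rho_exceeded[OF \<rho>(1)] \<rho>(2)[of x] by auto
    have "t \<le> C * ((2 * \<rho> x) powr (\<delta>/m) * (2 * \<rho> x + dist x y) powr (1-\<delta>/m))"
      using radius_comparison[OF decay growth shift K K2 K3 psi_nonneg[OF U0] p t(1,2)]
      by (intro balance[OF t(1) p(1)]) auto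
    also have "\<dots> \<le> C * (2 * (\<rho> x powr (\<delta>/m) * (\<rho> x + dist x y) powr (1-\<delta>/m)))"
      using C \<rho>(2)[of x] \<delta> m by (intro mult_left_mono powr_interpolation_double) auto
    finally show ?thesis using t(3) by (simp add: mult_ac)
  qed
  then show thesis using that[of "4*C" "\<delta>/m"] C \<delta> m by auto
qed

theorem proposition2p1:
  fixes M :: "'a::metric_space measure" and \<kappa> n :: real and q :: ereal and U :: "'a \<Rightarrow> real"
  assumes "rd_space M \<kappa> n"
    and "emeasure M UNIV = \<infinity>"
    and "ereal (max 1 (n/2)) < q"
    and "reverse_hoelder M q U"
    and "\<forall>x. 0 \<le> U x"
    and "\<not> (AE x in M. U x = 0)"
    and "\<exists>C>0. \<forall>x r. 0 < r \<longrightarrow>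
           (LINT y:ball x (2*r)|M. U y) \<le> C * (LINT y:ball x r|M. U y)"
  shows "(\<forall>x. 0 < crit_rho M U x \<and> crit_rho M U x < \<infinity>) \<and>
         (\<exists>C3>0. \<exists>k0>0. \<forall>x y.
            real_of_ereal (crit_rho M U y) \<le>
              C3 * real_of_ereal (crit_rho M U x) powr (1/(1+k0))
                 * (real_of_ereal (crit_rho M U x) + dist x y) powr (k0/(1+k0)))"
proof
  show "\<forall>x. 0 < crit_rho M U x \<and> crit_rho M U x < \<infinity>"
    using crit_rho_pos_finite[OF assms(1-4,6)] by (metis ereal_less(2) less_ereal.simps(4))
  obtain C a where C: "0 < C" and a: "0 < a" "a < 1" and adm: "\<And>x y.
      real_of_ereal (crit_rho M U y) \<le> C * real_of_ereal (crit_rho M U x) powr a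
        * (real_of_ereal (crit_rho M U x) + dist x y) powr (1-a)"
    using crit_rho_admissible_power[OF assms(1-4,6,7)] by blast
  define k0 where "k0 = 1/a - 1"
  have "0 < k0" "1/(1+k0) = a" "k0/(1+k0) = 1 - a"
    unfolding k0_def using a by (auto simp: field_simps)
  then show "\<exists>C3>0. \<exists>k0>0. \<forall>x y. real_of_ereal (crit_rho M U y) \<le>
      C3 * real_of_ereal (crit_rho M U x) powr (1/(1+k0))
        * (real_of_ereal (crit_rho M U x) + dist x y) powr (k0/(1+k0))"
    using C adm by metis
qed

end
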